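(* Consider the sovereign default economy described in the context, with lenders' constant (non-stochastic) per-period endowment $\bar z = z$, and suppose $\{c^{\ast},c^{L,\ast},B^{\ast},b^{\ast},m_R^{\ast},m_A^{\ast},\delta^{\ast}\}$, $\{V_R^{\ast},V_A^{\ast},W_R^{\ast},W_A^{\ast}\}$, a perceived law of motion $\Gamma$ and a price function $q$ form a recursive equilibrium of this economy. Then for any other constant lenders' endowment $\hat z \neq z$, there exists a recursive equilibrium of the economy with $\bar z=\hat z$ (all other primitives unchanged) having the identical bond price function $q$ and identical borrower allocations (consumption $c^{\ast}$, bond policy $B^{\ast}$ and default decisions $\delta^{\ast}$).
   Context: Time is discrete. Let $(Y_t)$ be a Markov chain on a finite set $\mathbb{Y}\subseteq\mathbb{R}_+$ with transition matrix $P_{Y'|Y}$, and let $(X_t)$ be i.i.d. on $\mathbb{X}=[\underline x,\bar x]$ with a Lebesgue density, independent of $(Y_t)$; $W_t=(X_t,Y_t)\in\mathbb{W}=\mathbb{X}\times\mathbb{Y}$ and the borrower's endowment at $t$ is $y_t+x_t$. $E_Y[\cdot\mid y]$ and $E_X[\cdot]$ denote expectations under $P_{Y'|Y}(\cdot\mid y)$ and under the law of $X$. A long-term bond is traded: each period a fraction $\lambda\in(0,1]$ matures and a coupon $\psi$ is paid on the remaining fraction $1-\lambda$. Bond holdings lie in a bounded set $\mathbb{B}\subseteq\mathbb{R}$. A price function is $q:\mathbb{Y}\times\mathbb{B}\to\mathbb{R}_+$. Borrower: period utility $u$ strictly increasing, strictly concave, satisfying Inada conditions; discount factor $\beta\in(0,1)$;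 re-entry probability $\pi\in(0,1)$; output cost $\phi:\mathbb{Y}\to\mathbb{Y}$ with $\phi(y)\le y$. Values: $V(w,B)=\max\{V_A(\underline x,y),V_R(w,B)\}$; $V_R(w,B)=\max_{B'\in\mathbb{B}}\{u(c)+\beta E[V(W',B')\mid w]\}$ with $c=y+x-q(y,B')(B'-(1-\lambda)B)+(\lambda+(1-\lambda)\psi)B$; $V_A(w)=u(y+x-\phi(y))+\beta E[(1-\pi)V_A(W')+\pi V(W',0)\mid w]$; default indicator $\delta(w,B)=\mathbf{1}\{V_R(w,B)\ge V_A(\underline x,y)\}$ (1 = repay). Lenders (a continuum of measure one, atomistic, price takers): discount factor $\gamma\in(0,1)$, robustness parameter $\theta\in(\underline\theta,+\infty]$, constant endowment $\bar z$. Let $\mathcal{M}=\{g:\mathbb{Y}\to\mathbb{R}_+:\sum_{y'}g(y')P_{Y'|Y}(y'\mid y)=1\ \forall y\}$ and, for $g\in\mathcal M$, $\mathcal{E}[g](y)=E_Y[g(Y')\log g(Y')\mid y]$. Given a perceived law of motion $\Gamma:\mathbb{W}\times\mathbb{B}\to\mathbb{B}$ for aggregate debt, $W_R(w,B,b)=\min_{m\in\mathcal M}\max_{c^L,b'}\{c^L+\theta\gamma\mathcal E[m](y)+\gamma E_Y[m(Y')\mathcal W(Y',B',b')\mid y]\}$ subject to $c^L=\bar z+q(y,B')(b'-(1-\lambda)b)-(\lambda+(1-\lambda)\psi)b$ and $B'=\Gamma(w,B)$, where $\mathcal W(y',B',b')=E_X[W(y',X',B',b')]$ and $W(w',B',b')=\delta(w',B')W_R(w',B',b')+(1-\delta(w',B'))W_A(y')$;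 and $W_A(y)=\min_{m\in\mathcal M}\{\bar z+\theta\gamma\mathcal E[m](y)+\gamma E_Y[m(Y')((1-\pi)W_A(Y')+\pi\mathcal W(Y',0,0))\mid y]\}$. A recursive equilibrium is a collection of policy functions (borrower consumption $c^{\ast}$ and bonds $B^{\ast}:\mathbb W\times\mathbb B\to\mathbb B$, lender consumption $c^{L,\ast}$ and bonds $b^{\ast}:\mathbb W\times\mathbb B^2\to\mathbb B$, distortions $m_R^{\ast}:\mathbb W\times\mathbb B^2\to\mathcal M$, $m_A^{\ast}:\mathbb Y\to\mathcal M$, default decisions $\delta^{\ast}:\mathbb W\times\mathbb B\to\{0,1\}$), value functions $V_R^{\ast},V_A^{\ast},W_R^{\ast},W_A^{\ast}$, a perceived law of motion $\Gamma$ and a price function $q$ such that: (1) the policies, distortions and values solve the borrower's and individual lender's problems above; (2) markets clear: $B^{\ast}(w,B)=b^{\ast}(w,B,B)$ for all $(w,B)$; (3) $B^{\ast}(w,B)=\Gamma(w,B)$ for all $(w,B)$. *)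

theory Defs
  imports "HOL-Analysis.Analysis" "HOL-Probability.Probability"
begin

(* Primitives of the sovereign default economy.
   States: w = (x, y) :: real * real.  Bond holdings: real. *)
record economy =
  Ys    :: "real set"
  P     :: "real \<Rightarrow> real \<Rightarrow> real"  (* P y y' = P_{Y'|Y}(y' | y) *)
  xlo   :: real
  xhi   :: real
  fX    :: "real \<Rightarrow> real"
  lam   :: real
  psi   :: real
  Bs    :: "real set"
  u     :: "real \<Rightarrow> real"
  beta  :: real
  pii   :: real
  phi   :: "real \<Rightarrow> real"
  gam   :: real
  theta :: ereal
  theta_low :: real
  zbar  :: real

definition MX :: "economy \<Rightarrow> real measure" where
  "MX e = density lborel (\<lambda>x. ennreal (fX e x))"

definition Wset :: "economy \<Rightarrow> (real \<times> real) set" where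
  "Wset e = {xlo e..xhi e} \<times> Ys e"

definition strictly_concave_on :: "real set \<Rightarrow> (real \<Rightarrow> real) \<Rightarrow> bool" where
  "strictly_concave_on S f \<longleftrightarrow> (\<forall>x\<in>S. \<forall>y\<in>S. \<forall>t. x \<noteq> y \<and> 0 < t \<and> t < 1 \<longrightarrow>
      f ((1 - t) * x + t * y) > (1 - t) * f x + t * f y)"

definition economy_ok :: "economy \<Rightarrow> bool" where
  "economy_ok e \<longleftrightarrow>
     finite (Ys e) \<and> Ys e \<noteq> {} \<and> Ys e \<subseteq> {0..} \<and>
     (\<forall>y\<in>Ys e. \<forall>y'\<in>Ys e. P e y y' \<ge> 0) \<and>
     (\<forall>y\<in>Ys e. (\<Sum>y'\<in>Ys e. P e y y') = 1) \<and>
     xlo e < xhi e \<and>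
     fX e \<in> borel_measurable borel \<and> (\<forall>x. fX e x \<ge> 0) \<and>
     (\<forall>x. x \<notin> {xlo e..xhi e} \<longrightarrow> fX e x = 0) \<and> prob_space (MX e) \<and>
     0 < lam e \<and> lam e \<le> 1 \<and>
     bounded (Bs e) \<and>
     strict_mono_on {0<..} (u e) \<and> strictly_concave_on {0<..} (u e) \<and>
     (\<forall>c>0. u e differentiable at c) \<and>
     filterlim (deriv (u e)) at_top (at_right 0) \<and>
     ((deriv (u e)) \<longlongrightarrow> 0) at_top \<and>
     0 < beta e \<and> beta e < 1 \<and> 0 < pii e \<and> pii e < 1 \<and>
     (\<forall>y\<in>Ys e. phi e y \<in> Ys e \<and> phi e y \<le> y) \<and>
     0 < gam e \<and> gam e < 1 \<and> ereal (theta_low e) < theta e"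

definition ExpY :: "economy \<Rightarrow> (real \<Rightarrow> real) \<Rightarrow> real \<Rightarrow> real" where
  "ExpY e f y = (\<Sum>y'\<in>Ys e. P e y y' * f y')"

definition ExpX :: "economy \<Rightarrow> (real \<Rightarrow> real) \<Rightarrow> real" where
  "ExpX e f = integral\<^sup>L (MX e) f"

(* E[ f(W') | w ] with W' = (X', Y'), X' independent of Y' *)
definition condE :: "economy \<Rightarrow> (real \<times> real \<Rightarrow> real) \<Rightarrow> real \<times> real \<Rightarrow> real" where
  "condE e f w = ExpY e (\<lambda>y'. ExpX e (\<lambda>x. f (x, y'))) (snd w)"

definition Ment :: "economy \<Rightarrow> (real \<Rightarrow> real) set" where
  "Ment e = {g. (\<forall>y'\<in>Ys e. g y' \<ge> 0) \<and> (\<forall>y\<in>Ys e. (\<Sum>y'\<in>Ys e. g y' * P e y y') = 1)}"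

(* relative entropy E_Y[g log g | y]  (note 0 * ln 0 = 0) *)
definition ent :: "economy \<Rightarrow> (real \<Rightarrow> real) \<Rightarrow> real \<Rightarrow> real" where
  "ent e g y = ExpY e (\<lambda>y'. g y' * ln (g y')) y"

definition Vfun :: "economy \<Rightarrow> (real \<times> real \<Rightarrow> real \<Rightarrow> real) \<Rightarrow> (real \<times> real \<Rightarrow> real)
                     \<Rightarrow> real \<times> real \<Rightarrow> real \<Rightarrow> real" where
  "Vfun e VR VA w B = max (VA (xlo e, snd w)) (VR w B)"

definition cons :: "economy \<Rightarrow> (real \<Rightarrow> real \<Rightarrow> real) \<Rightarrow> real \<times> real \<Rightarrow> real \<Rightarrow> real \<Rightarrow> real" where
  "cons e q w B B' = snd w + fst w - q (snd w) B' * (B' - (1 - lam e) * B)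
                     + (lam e + (1 - lam e) * psi e) * B"

definition consL :: "economy \<Rightarrow> (real \<Rightarrow> real \<Rightarrow> real) \<Rightarrow> (real \<times> real \<Rightarrow> real \<Rightarrow> real)
                      \<Rightarrow> real \<times> real \<Rightarrow> real \<Rightarrow> real \<Rightarrow> real \<Rightarrow> real" where
  "consL e q Gam w B b b' = zbar e + q (snd w) (Gam w B) * (b' - (1 - lam e) * b)
                             - (lam e + (1 - lam e) * psi e) * b"

definition Wfun :: "(real \<times> real \<Rightarrow> real \<Rightarrow> real) \<Rightarrow> (real \<times> real \<Rightarrow> real \<Rightarrow> real \<Rightarrow> real)
                     \<Rightarrow> (real \<Rightarrow> real) \<Rightarrow> real \<times> real \<Rightarrow> real \<Rightarrow> real \<Rightarrow> real" where
  "Wfun ds WR WA w' B' b' = ds w' B' * WR w' B' b' + (1 - ds w' B') * WA (snd w')"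

definition calW :: "economy \<Rightarrow> (real \<times> real \<Rightarrow> real \<Rightarrow> real) \<Rightarrow> (real \<times> real \<Rightarrow> real \<Rightarrow> real \<Rightarrow> real)
                     \<Rightarrow> (real \<Rightarrow> real) \<Rightarrow> real \<Rightarrow> real \<Rightarrow> real \<Rightarrow> real" where
  "calW e ds WR WA y' B' b' = ExpX e (\<lambda>x. Wfun ds WR WA (x, y') B' b')"

definition JR :: "economy \<Rightarrow> (real \<Rightarrow> real \<Rightarrow> real) \<Rightarrow> (real \<times> real \<Rightarrow> real \<Rightarrow> real)
                   \<Rightarrow> (real \<times> real \<Rightarrow> real \<Rightarrow> real) \<Rightarrow> (real \<times> real \<Rightarrow> real \<Rightarrow> real \<Rightarrow> real)
                   \<Rightarrow> (real \<Rightarrow> real) \<Rightarrow> real \<times> real \<Rightarrow> real \<Rightarrow> real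
                   \<Rightarrow> (real \<Rightarrow> real) \<Rightarrow> real \<Rightarrow> ereal" where
  "JR e q Gam ds WR WA w B b m b' =
     ereal (consL e q Gam w B b b')
     + theta e * ereal (gam e * ent e m (snd w))
     + ereal (gam e * ExpY e (\<lambda>y'. m y' * calW e ds WR WA y' (Gam w B) b') (snd w))"

definition JA :: "economy \<Rightarrow> (real \<times> real \<Rightarrow> real \<Rightarrow> real)
                   \<Rightarrow> (real \<times> real \<Rightarrow> real \<Rightarrow> real \<Rightarrow> real) \<Rightarrow> (real \<Rightarrow> real)
                   \<Rightarrow> real \<Rightarrow> (real \<Rightarrow> real) \<Rightarrow> ereal" where
  "JA e ds WR WA y m =
     ereal (zbar e)
     + theta e * ereal (gam e * ent e m y)
     + ereal (gam e * ExpY e (\<lambda>y'. m y' * ((1 - pii e) * WA y' + pii e * calW e ds WR WA y' 0 0)) y)"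

definition recursive_equilibrium ::
  "economy \<Rightarrow> (real \<Rightarrow> real \<Rightarrow> real)                       \<comment> \<open>q\<close>
   \<Rightarrow> (real \<times> real \<Rightarrow> real \<Rightarrow> real)                          \<comment> \<open>c*\<close>
   \<Rightarrow> (real \<times> real \<Rightarrow> real \<Rightarrow> real)                          \<comment> \<open>B*\<close>
   \<Rightarrow> (real \<times> real \<Rightarrow> real \<Rightarrow> real \<Rightarrow> real)                  \<comment> \<open>c^{L,*}\<close>
   \<Rightarrow> (real \<times> real \<Rightarrow> real \<Rightarrow> real \<Rightarrow> real)                  \<comment> \<open>b*\<close>
   \<Rightarrow> (real \<times> real \<Rightarrow> real \<Rightarrow> real \<Rightarrow> (real \<Rightarrow> real))        \<comment> \<open>m_R*\<close>
   \<Rightarrow> (real \<Rightarrow> (real \<Rightarrow> real))                               \<comment> \<open>m_A*\<close>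
   \<Rightarrow> (real \<times> real \<Rightarrow> real \<Rightarrow> real)                          \<comment> \<open>delta*\<close>
   \<Rightarrow> (real \<times> real \<Rightarrow> real \<Rightarrow> real)                          \<comment> \<open>V_R*\<close>
   \<Rightarrow> (real \<times> real \<Rightarrow> real)                                  \<comment> \<open>V_A*\<close>
   \<Rightarrow> (real \<times> real \<Rightarrow> real \<Rightarrow> real \<Rightarrow> real)                  \<comment> \<open>W_R*\<close>
   \<Rightarrow> (real \<Rightarrow> real)                                          \<comment> \<open>W_A*\<close>
   \<Rightarrow> (real \<times> real \<Rightarrow> real \<Rightarrow> real)                          \<comment> \<open>Gamma\<close>
   \<Rightarrow> bool" where
  "recursive_equilibrium e q cs Bst cL bs mR mA ds VR VA WR WA Gam \<longleftrightarrow>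
     \<comment> \<open>price function and perceived law of motion have the right ranges\<close>
     (\<forall>y\<in>Ys e. \<forall>B\<in>Bs e. q y B \<ge> 0) \<and>
     (\<forall>w\<in>Wset e. \<forall>B\<in>Bs e. Gam w B \<in> Bs e) \<and>
     \<comment> \<open>expectations over X are well defined\<close>
     (\<forall>y'\<in>Ys e. \<forall>B'\<in>Bs e \<union> {0}.
        integrable (MX e) (\<lambda>x. Vfun e VR VA (x, y') B') \<and>
        integrable (MX e) (\<lambda>x. VA (x, y')) \<and>
        (\<forall>b'\<in>Bs e \<union> {0}. integrable (MX e) (\<lambda>x. Wfun ds WR WA (x, y') B' b'))) \<and>
     \<comment> \<open>(1a) borrower's repayment problem and default decision\<close>
     (\<forall>w\<in>Wset e. \<forall>B\<in>Bs e.
        Bst w B \<in> Bs e \<and>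
        cs w B = cons e q w B (Bst w B) \<and> cs w B > 0 \<and>
        VR w B = u e (cs w B) + beta e * condE e (\<lambda>w'. Vfun e VR VA w' (Bst w B)) w \<and>
        (\<forall>B'\<in>Bs e. cons e q w B B' > 0 \<longrightarrow>
           u e (cons e q w B B') + beta e * condE e (\<lambda>w'. Vfun e VR VA w' B') w \<le> VR w B) \<and>
        ds w B = (if VR w B \<ge> VA (xlo e, snd w) then 1 else 0)) \<and>
     \<comment> \<open>(1b) borrower's autarky value\<close>
     (\<forall>w\<in>Wset e.
        VA w = u e (snd w + fst w - phi e (snd w))
               + beta e * condE e (\<lambda>w'. (1 - pii e) * VA w' + pii e * Vfun e VR VA w' 0) w) \<and>
     \<comment> \<open>(1c) lender's problem in repayment: W_R = min_m max_{b'} J, attained at (m_R*, b*)\<close>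
     (\<forall>w\<in>Wset e. \<forall>B\<in>Bs e. \<forall>b\<in>Bs e.
        bs w B b \<in> Bs e \<and> mR w B b \<in> Ment e \<and>
        cL w B b = consL e q Gam w B b (bs w B b) \<and>
        ereal (WR w B b) = JR e q Gam ds WR WA w B b (mR w B b) (bs w B b) \<and>
        (\<forall>b'\<in>Bs e. JR e q Gam ds WR WA w B b (mR w B b) b'
                     \<le> JR e q Gam ds WR WA w B b (mR w B b) (bs w B b)) \<and>
        (\<forall>m\<in>Ment e. ereal (WR w B b) \<le> (SUP b'\<in>Bs e. JR e q Gam ds WR WA w B b m b'))) \<and>
     \<comment> \<open>(1d) lender's value when the borrower is in autarky\<close>
     (\<forall>y\<in>Ys e.
        mA y \<in> Ment e \<and>
        ereal (WA y) = JA e ds WR WA y (mA y) \<and>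
        (\<forall>m\<in>Ment e. JA e ds WR WA y (mA y) \<le> JA e ds WR WA y m)) \<and>
     \<comment> \<open>(2) market clearing\<close>
     (\<forall>w\<in>Wset e. \<forall>B\<in>Bs e. Bst w B = bs w B B) \<and>
     \<comment> \<open>(3) consistency of the perceived law of motion\<close>
     (\<forall>w\<in>Wset e. \<forall>B\<in>Bs e. Bst w B = Gam w B)"

end

theory Submission
  imports Defs
begin

text \<open>Changing the lenders' endowment from \<open>z\<close> to \<open>z + d\<close> raises their per-period consumption
  by \<open>d\<close> in every state and under every choice, and nothing else in the economy depends on it.
  Since the distortions \<open>m\<close> are densities with \<open>E[m] = 1\<close>, shifting the lenders' value functions
  \<open>W\<^sub>R, W\<^sub>A\<close> by the constant \<open>k = d / (1 - \<gamma>)\<close> shifts every objective of the lenders' min-max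
  problems by exactly \<open>d + \<gamma> k = k\<close>. A constant shift preserves minimisers and maximisers, so the
  old policies, distortions, price and borrower allocation still form an equilibrium.\<close>

lemma integral_add_const_prob:
  fixes f :: "'a \<Rightarrow> real"
  assumes "prob_space M" and "integrable M f"
  shows "integral\<^sup>L M (\<lambda>x. f x + k) = integral\<^sup>L M f + k"
proof -
  interpret prob_space M by (rule assms(1))
  show ?thesis using assms(2) by (simp add: prob_space)
qed

lemma ExpY_distortion_add_const:
  assumes "m \<in> Ment e" and "y \<in> Ys e"
  shows "ExpY e (\<lambda>y'. m y' * (f y' + k)) y = ExpY e (\<lambda>y'. m y' * f y') y + k"
proof -
  have mass: "(\<Sum>y'\<in>Ys e. m y' * P e y y') = 1"
    using assms by (simp add: Ment_def)
  have "ExpY e (\<lambda>y'. m y' * (f y' + k)) y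
      = ExpY e (\<lambda>y'. m y' * f y') y + k * (\<Sum>y'\<in>Ys e. m y' * P e y y')"
    by (simp add: ExpY_def algebra_simps sum.distrib sum_distrib_left)
  then show ?thesis by (simp add: mass)
qed

context
  fixes e :: economy and z :: real
begin

lemma zbar_update_invariant [simp]:
  "Ys (e\<lparr>zbar := z\<rparr>) = Ys e"
  "Bs (e\<lparr>zbar := z\<rparr>) = Bs e"
  "xlo (e\<lparr>zbar := z\<rparr>) = xlo e"
  "u (e\<lparr>zbar := z\<rparr>) = u e"
  "beta (e\<lparr>zbar := z\<rparr>) = beta e"
  "pii (e\<lparr>zbar := z\<rparr>) = pii e"
  "phi (e\<lparr>zbar := z\<rparr>) = phi e"
  "MX (e\<lparr>zbar := z\<rparr>) = MX e"
  "Wset (e\<lparr>zbar := z\<rparr>) = Wset e"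
  "Ment (e\<lparr>zbar := z\<rparr>) = Ment e"
  "ExpY (e\<lparr>zbar := z\<rparr>) = ExpY e"
  "ExpX (e\<lparr>zbar := z\<rparr>) = ExpX e"
  "condE (e\<lparr>zbar := z\<rparr>) = condE e"
  "ent (e\<lparr>zbar := z\<rparr>) = ent e"
  "Vfun (e\<lparr>zbar := z\<rparr>) = Vfun e"
  "cons (e\<lparr>zbar := z\<rparr>) = cons e"
  "calW (e\<lparr>zbar := z\<rparr>) = calW e"
  by (simp_all add: fun_eq_iff MX_def Wset_def Ment_def ExpY_def ExpX_def condE_def ent_def
      Vfun_def cons_def calW_def)

lemma consL_zbar_update:
  "consL (e\<lparr>zbar := z\<rparr>) q Gam w B b b' = consL e q Gam w B b b' + (z - zbar e)"
  by (simp add: consL_def)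

end

lemma Wfun_add_const:
  "Wfun ds (\<lambda>w B b. WR w B b + k) (\<lambda>y. WA y + k) w B b = Wfun ds WR WA w B b + k"
  by (simp add: Wfun_def algebra_simps)

lemma calW_add_const:
  assumes "prob_space (MX e)" and "integrable (MX e) (\<lambda>x. Wfun ds WR WA (x, y') B' b')"
  shows "calW e ds (\<lambda>w B b. WR w B b + k) (\<lambda>y. WA y + k) y' B' b' = calW e ds WR WA y' B' b' + k"
  using integral_add_const_prob[OF assms]
  by (simp add: calW_def ExpX_def Wfun_add_const)

context
  fixes e :: economy and z k :: real
  assumes ps: "prob_space (MX e)"
    and shift: "z - zbar e + gam e * k = k"
begin

lemma JR_zbar_update:
  assumes "snd w \<in> Ys e" and "m \<in> Ment e"
    and int: "\<And>y'. y' \<in> Ys e \<Longrightarrow> integrable (MX e) (\<lambda>x. Wfun ds WR WA (x, y') (Gam w B) b')"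
  shows "JR (e\<lparr>zbar := z\<rparr>) q Gam ds (\<lambda>w B b. WR w B b + k) (\<lambda>y. WA y + k) w B b m b'
       = JR e q Gam ds WR WA w B b m b' + ereal k"
proof -
  let ?E = "ExpY e (\<lambda>y'. m y' * calW e ds WR WA y' (Gam w B) b') (snd w)"
  let ?E' = "ExpY e
    (\<lambda>y'. m y' * calW e ds (\<lambda>w B b. WR w B b + k) (\<lambda>y. WA y + k) y' (Gam w B) b') (snd w)"
  have "?E' = ExpY e (\<lambda>y'. m y' * (calW e ds WR WA y' (Gam w B) b' + k)) (snd w)"
    unfolding ExpY_def by (intro sum.cong refl) (simp add: calW_add_const[OF ps int])
  also have "\<dots> = ?E + k"
    by (rule ExpY_distortion_add_const) fact+
  finally have "?E' = ?E + k" .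
  moreover have "ereal (a + (z - zbar e)) + T + ereal (gam e * (E + k))
      = ereal a + T + ereal (gam e * E) + ereal k" for a T E
    \<comment> \<open>\<open>T\<close> is the entropy penalty, infinite when \<open>\<theta> = \<infinity>\<close>\<close>
    using shift by (cases T) (simp_all add: algebra_simps)
  ultimately show ?thesis
    by (simp add: JR_def consL_zbar_update)
qed

lemma JA_zbar_update:
  assumes "y \<in> Ys e" and "m \<in> Ment e"
    and int: "\<And>y'. y' \<in> Ys e \<Longrightarrow> integrable (MX e) (\<lambda>x. Wfun ds WR WA (x, y') 0 0)"
  shows "JA (e\<lparr>zbar := z\<rparr>) ds (\<lambda>w B b. WR w B b + k) (\<lambda>y. WA y + k) y m
       = JA e ds WR WA y m + ereal k"
proof -
  let ?V = "\<lambda>y'. (1 - pii e) * WA y' + pii e * calW e ds WR WA y' 0 0"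
  let ?V' = "\<lambda>y'. (1 - pii e) * (WA y' + k)
    + pii e * calW e ds (\<lambda>w B b. WR w B b + k) (\<lambda>y. WA y + k) y' 0 0"
  have "ExpY e (\<lambda>y'. m y' * ?V' y') y = ExpY e (\<lambda>y'. m y' * (?V y' + k)) y"
    unfolding ExpY_def
    by (intro sum.cong refl) (simp add: calW_add_const[OF ps int], simp add: algebra_simps)
  also have "\<dots> = ExpY e (\<lambda>y'. m y' * ?V y') y + k"
    by (rule ExpY_distortion_add_const) fact+
  finally have E: "ExpY e (\<lambda>y'. m y' * ?V' y') y = ExpY e (\<lambda>y'. m y' * ?V y') y + k" .
  have "ereal z + T + ereal (gam e * (E + k)) = ereal (zbar e) + T + ereal (gam e * E) + ereal k"
    for T E
    using shift by (cases T) (simp_all add: algebra_simps)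
  then show ?thesis
    by (simp add: JA_def E)
qed

end

lemma saddle_point_add_const:
  fixes J J' :: "'m \<Rightarrow> 'b \<Rightarrow> ereal"
  assumes "m0 \<in> M" and "b0 \<in> B"
    and "W = J m0 b0" and "\<forall>b\<in>B. J m0 b \<le> J m0 b0" and "\<forall>m\<in>M. W \<le> (SUP b\<in>B. J m b)"
    and J': "\<forall>m\<in>M. \<forall>b\<in>B. J' m b = J m b + ereal k"
  shows "W + ereal k = J' m0 b0 \<and> (\<forall>b\<in>B. J' m0 b \<le> J' m0 b0)
    \<and> (\<forall>m\<in>M. W + ereal k \<le> (SUP b\<in>B. J' m b))"
proof (intro conjI ballI)
  show "W + ereal k = J' m0 b0"
    using assms by simp
  show "J' m0 b \<le> J' m0 b0" if "b \<in> B" for b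
    using assms that by (simp add: add_right_mono)
  fix m assume "m \<in> M"
  then have "(SUP b\<in>B. J' m b) = (SUP b\<in>B. J m b + ereal k)"
    using J' by (auto intro: SUP_cong)
  also have "\<dots> = (SUP b\<in>B. J m b) + ereal k"
    using \<open>b0 \<in> B\<close> by (intro SUP_ereal_add_left) auto
  finally show "W + ereal k \<le> (SUP b\<in>B. J' m b)"
    using assms(5) \<open>m \<in> M\<close> by (simp add: add_right_mono)
qed

lemma recursive_equilibrium_integrable_Wfun:
  assumes "recursive_equilibrium e q cs Bst cL bs mR mA ds VR VA WR WA Gam"
    and "y' \<in> Ys e" and "B' \<in> Bs e \<union> {0}" and "b' \<in> Bs e \<union> {0}"
  shows "integrable (MX e) (\<lambda>x. Wfun ds WR WA (x, y') B' b')"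
  using assms unfolding recursive_equilibrium_def by blast

context
  fixes e z k q cs Bst cL bs mR mA ds VR VA WR WA Gam
  assumes eq: "recursive_equilibrium e q cs Bst cL bs mR mA ds VR VA WR WA Gam"
    and ps: "prob_space (MX e)"
    and shift: "z - zbar e + gam e * k = k"
begin

lemma lender_repayment_zbar_update:
  defines "e' \<equiv> e\<lparr>zbar := z\<rparr>"
    and "WR' \<equiv> \<lambda>w B b. WR w B b + k" and "WA' \<equiv> \<lambda>y. WA y + k"
  shows "\<forall>w\<in>Wset e. \<forall>B\<in>Bs e. \<forall>b\<in>Bs e. bs w B b \<in> Bs e \<and> mR w B b \<in> Ment e \<and>
      ereal (WR' w B b) = JR e' q Gam ds WR' WA' w B b (mR w B b) (bs w B b) \<and>
      (\<forall>b'\<in>Bs e. JR e' q Gam ds WR' WA' w B b (mR w B b) b'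
                   \<le> JR e' q Gam ds WR' WA' w B b (mR w B b) (bs w B b)) \<and>
      (\<forall>m\<in>Ment e. ereal (WR' w B b) \<le> (SUP b'\<in>Bs e. JR e' q Gam ds WR' WA' w B b m b'))"
proof (intro ballI)
  fix w B b assume w: "w \<in> Wset e" and B: "B \<in> Bs e" and b: "b \<in> Bs e"
  note eq' = eq[unfolded recursive_equilibrium_def]
  have "snd w \<in> Ys e" and "Gam w B \<in> Bs e"
    using eq' w B by (auto simp: Wset_def)
  then have J': "\<forall>m\<in>Ment e. \<forall>b'\<in>Bs e.
      JR e' q Gam ds WR' WA' w B b m b' = JR e q Gam ds WR WA w B b m b' + ereal k"
    unfolding e'_def WR'_def WA'_def
    by (intro ballI JR_zbar_update[OF ps shift])
      (auto intro: recursive_equilibrium_integrable_Wfun[OF eq])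
  have WR': "ereal (WR' w B b) = ereal (WR w B b) + ereal k"
    by (simp add: WR'_def)
  have "mR w B b \<in> Ment e" and "bs w B b \<in> Bs e"
    and "ereal (WR w B b) = JR e q Gam ds WR WA w B b (mR w B b) (bs w B b)"
    and "\<forall>b'\<in>Bs e. JR e q Gam ds WR WA w B b (mR w B b) b'
                   \<le> JR e q Gam ds WR WA w B b (mR w B b) (bs w B b)"
    and "\<forall>m\<in>Ment e. ereal (WR w B b) \<le> (SUP b'\<in>Bs e. JR e q Gam ds WR WA w B b m b')"
    using eq' w B b by blast+
  with saddle_point_add_const[OF this J']
  show "bs w B b \<in> Bs e \<and> mR w B b \<in> Ment e \<and>
      ereal (WR' w B b) = JR e' q Gam ds WR' WA' w B b (mR w B b) (bs w B b) \<and>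
      (\<forall>b'\<in>Bs e. JR e' q Gam ds WR' WA' w B b (mR w B b) b'
                   \<le> JR e' q Gam ds WR' WA' w B b (mR w B b) (bs w B b)) \<and>
      (\<forall>m\<in>Ment e. ereal (WR' w B b) \<le> (SUP b'\<in>Bs e. JR e' q Gam ds WR' WA' w B b m b'))"
    unfolding WR' by blast
qed

lemma lender_autarky_zbar_update:
  defines "e' \<equiv> e\<lparr>zbar := z\<rparr>"
    and "WR' \<equiv> \<lambda>w B b. WR w B b + k" and "WA' \<equiv> \<lambda>y. WA y + k"
  shows "\<forall>y\<in>Ys e. mA y \<in> Ment e \<and> ereal (WA' y) = JA e' ds WR' WA' y (mA y) \<and>
      (\<forall>m\<in>Ment e. JA e' ds WR' WA' y (mA y) \<le> JA e' ds WR' WA' y m)"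
proof
  fix y assume y: "y \<in> Ys e"
  have J': "JA e' ds WR' WA' y m = JA e ds WR WA y m + ereal k" if "m \<in> Ment e" for m
    unfolding e'_def WR'_def WA'_def using y that
    by (intro JA_zbar_update[OF ps shift]) (auto intro: recursive_equilibrium_integrable_Wfun[OF eq])
  have "mA y \<in> Ment e" and "ereal (WA y) = JA e ds WR WA y (mA y)"
    and "\<forall>m\<in>Ment e. JA e ds WR WA y (mA y) \<le> JA e ds WR WA y m"
    using eq y unfolding recursive_equilibrium_def by blast+
  moreover have "ereal (WA' y) = ereal (WA y) + ereal k"
    by (simp add: WA'_def)
  ultimately show "mA y \<in> Ment e \<and> ereal (WA' y) = JA e' ds WR' WA' y (mA y) \<and>
      (\<forall>m\<in>Ment e. JA e' ds WR' WA' y (mA y) \<le> JA e' ds WR' WA' y m)"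
    using J' by (auto simp del: plus_ereal.simps intro: add_right_mono)
qed

lemma recursive_equilibrium_zbar_update:
  "recursive_equilibrium (e\<lparr>zbar := z\<rparr>) q cs Bst
     (\<lambda>w B b. consL (e\<lparr>zbar := z\<rparr>) q Gam w B b (bs w B b)) bs mR mA ds VR VA
     (\<lambda>w B b. WR w B b + k) (\<lambda>y. WA y + k) Gam"
proof -
  have integrability: "\<forall>y'\<in>Ys e. \<forall>B'\<in>Bs e \<union> {0}.
      integrable (MX e) (\<lambda>x. Vfun e VR VA (x, y') B') \<and> integrable (MX e) (\<lambda>x. VA (x, y')) \<and>
      (\<forall>b'\<in>Bs e \<union> {0}.
         integrable (MX e) (\<lambda>x. Wfun ds (\<lambda>w B b. WR w B b + k) (\<lambda>y. WA y + k) (x, y') B' b'))"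
  proof -
    interpret prob_space "MX e" by (rule ps)
    show ?thesis
      using eq recursive_equilibrium_integrable_Wfun[OF eq]
      unfolding recursive_equilibrium_def by (simp add: Wfun_add_const)
  qed
  show ?thesis
    using eq integrability lender_repayment_zbar_update lender_autarky_zbar_update
    unfolding recursive_equilibrium_def zbar_update_invariant
    by (elim conjE) (intro conjI; (assumption | simp only: simp_thms))
qed

end

theorem lemma1:
  fixes e :: economy and zhat :: real
    and q :: "real \<Rightarrow> real \<Rightarrow> real"
    and cs Bst ds VR Gam :: "real \<times> real \<Rightarrow> real \<Rightarrow> real"
    and cL bs WR :: "real \<times> real \<Rightarrow> real \<Rightarrow> real \<Rightarrow> real"
    and mR :: "real \<times> real \<Rightarrow> real \<Rightarrow> real \<Rightarrow> (real \<Rightarrow> real)"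
    and mA :: "real \<Rightarrow> (real \<Rightarrow> real)"
    and VA :: "real \<times> real \<Rightarrow> real"
    and WA :: "real \<Rightarrow> real"
  assumes "economy_ok e"
    and "recursive_equilibrium e q cs Bst cL bs mR mA ds VR VA WR WA Gam"
    and "zhat \<noteq> zbar e"
  shows "\<exists>cL' bs' mR' mA' VR' VA' WR' WA' Gam'.
           recursive_equilibrium (e\<lparr>zbar := zhat\<rparr>) q cs Bst cL' bs' mR' mA' ds VR' VA' WR' WA' Gam'"
proof -
  have "prob_space (MX e)" and "gam e < 1"
    using assms(1) by (simp_all add: economy_ok_def)
  moreover define k where "k = (zhat - zbar e) / (1 - gam e)"
  ultimately have "zhat - zbar e + gam e * k = k"
    by (simp add: field_simps)
  then show ?thesis
    using recursive_equilibrium_zbar_update[OF assms(2) \<open>prob_space (MX e)\<close>] by blast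
qed

end
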